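(* Let $T$ be a non-abelian finite simple group and $k\geqslant 4$. Then $\mathbb{Q}_k(T)\leqslant 1-\mathbb{P}_{k+1}(T)$.
   Context: Let $T^\#=T\setminus\{1\}$, $\mathscr{S}_k$ the set of $k$-subsets of $T^\#$, $\mathrm{Aut}(T,R)$ the setwise stabiliser of $R\subseteq T^\#$ in $\mathrm{Aut}(T)$, and $\mathbb{Q}_k(T)=|\{R\in\mathscr{S}_k:\mathrm{Aut}(T,R)\neq1\}|/|\mathscr{S}_k|$. For $m\geqslant2$ let $G=W(m,T)=\{(\alpha_1,\dots,\alpha_m)\pi\in\mathrm{Aut}(T)\wr S_m:\alpha_i\mathrm{Inn}(T)\text{ all equal}\}$ act on the right coset space $\Omega=[G:D]$, $D=\{(\alpha,\dots,\alpha)\pi:\alpha\in\mathrm{Aut}(T),\pi\in S_m\}$; for $t\in T$ let $\varphi_t$ be the inner automorphism $x\mapsto t^{-1}xt$. Define $\mathbb{P}_m(T)$ to be the proportion of tuples $(t_1,\dots,t_{m-1})\in T^{m-1}$ such that $\{D,D(\varphi_{t_1},\dots,\varphi_{t_{m-1}},1)\}$ is a base for $G$ (a subset of $\Omega$ with trivial pointwise stabiliser in $G$). *)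

theory Defs
  imports "HOL-Algebra.Algebra" "HOL-Combinatorics.Permutations" Complex_Main
begin

definition inn :: "('a, 'b) monoid_scheme \<Rightarrow> 'a \<Rightarrow> ('a \<Rightarrow> 'a)" where
  "inn T t = (\<lambda>x \<in> carrier T. inv\<^bsub>T\<^esub> t \<otimes>\<^bsub>T\<^esub> x \<otimes>\<^bsub>T\<^esub> t)"

definition Inn :: "('a, 'b) monoid_scheme \<Rightarrow> ('a \<Rightarrow> 'a) set" where
  "Inn T = inn T ` carrier T"

definition ksubsets :: "('a, 'b) monoid_scheme \<Rightarrow> nat \<Rightarrow> 'a set set" where
  "ksubsets T k = {R. R \<subseteq> carrier T - {\<one>\<^bsub>T\<^esub>} \<and> card R = k}"

definition setstab :: "('a, 'b) monoid_scheme \<Rightarrow> 'a set \<Rightarrow> ('a \<Rightarrow> 'a) set" where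
  "setstab T R = {\<alpha> \<in> auto T. \<alpha> ` R = R}"

definition QQ :: "nat \<Rightarrow> ('a, 'b) monoid_scheme \<Rightarrow> real" where
  "QQ k T = real (card {R \<in> ksubsets T k. setstab T R \<noteq> {(\<lambda>x \<in> carrier T. x)}})
            / real (card (ksubsets T k))"

text \<open>Aut(T) wr S_m realised faithfully as transformations of the product set T^m
  (functions on {..<m}); (alpha_1,...,alpha_m) sigma acts by f \<mapsto> (i \<mapsto> alpha_i (f (sigma i))).\<close>
definition Xpts :: "nat \<Rightarrow> ('a, 'b) monoid_scheme \<Rightarrow> (nat \<Rightarrow> 'a) set" where
  "Xpts m T = {..<m} \<rightarrow>\<^sub>E carrier T"

definition wr_elem :: "nat \<Rightarrow> ('a, 'b) monoid_scheme \<Rightarrow> (nat \<Rightarrow> 'a \<Rightarrow> 'a) \<Rightarrow> (nat \<Rightarrow> nat)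
    \<Rightarrow> ((nat \<Rightarrow> 'a) \<Rightarrow> (nat \<Rightarrow> 'a))" where
  "wr_elem m T \<alpha> \<sigma> = (\<lambda>f \<in> Xpts m T. \<lambda>i \<in> {..<m}. \<alpha> i (f (\<sigma> i)))"

definition Wgrp :: "nat \<Rightarrow> ('a, 'b) monoid_scheme \<Rightarrow> ((nat \<Rightarrow> 'a) \<Rightarrow> (nat \<Rightarrow> 'a)) set" where
  "Wgrp m T = {wr_elem m T \<alpha> \<sigma> | \<alpha> \<sigma>. (\<forall>i<m. \<alpha> i \<in> auto T)
      \<and> (\<forall>i<m. \<forall>j<m. \<alpha> i <#\<^bsub>AutoGroup T\<^esub> Inn T = \<alpha> j <#\<^bsub>AutoGroup T\<^esub> Inn T)
      \<and> \<sigma> permutes {..<m}}"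

definition Dgrp :: "nat \<Rightarrow> ('a, 'b) monoid_scheme \<Rightarrow> ((nat \<Rightarrow> 'a) \<Rightarrow> (nat \<Rightarrow> 'a)) set" where
  "Dgrp m T = {wr_elem m T (\<lambda>_. a) \<sigma> | a \<sigma>. a \<in> auto T \<and> \<sigma> permutes {..<m}}"

text \<open>Group product, written for right actions: y * g means first y, then g.\<close>
definition wmult :: "nat \<Rightarrow> ('a, 'b) monoid_scheme \<Rightarrow> ((nat \<Rightarrow> 'a) \<Rightarrow> (nat \<Rightarrow> 'a))
    \<Rightarrow> ((nat \<Rightarrow> 'a) \<Rightarrow> (nat \<Rightarrow> 'a)) \<Rightarrow> ((nat \<Rightarrow> 'a) \<Rightarrow> (nat \<Rightarrow> 'a))" where
  "wmult m T y g = compose (Xpts m T) g y"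

definition wone :: "nat \<Rightarrow> ('a, 'b) monoid_scheme \<Rightarrow> ((nat \<Rightarrow> 'a) \<Rightarrow> (nat \<Rightarrow> 'a))" where
  "wone m T = (\<lambda>f \<in> Xpts m T. f)"

definition Dcoset :: "nat \<Rightarrow> ('a, 'b) monoid_scheme \<Rightarrow> ((nat \<Rightarrow> 'a) \<Rightarrow> (nat \<Rightarrow> 'a))
    \<Rightarrow> ((nat \<Rightarrow> 'a) \<Rightarrow> (nat \<Rightarrow> 'a)) set" where
  "Dcoset m T y = (\<lambda>d. wmult m T d y) ` Dgrp m T"

definition Omega :: "nat \<Rightarrow> ('a, 'b) monoid_scheme \<Rightarrow> ((nat \<Rightarrow> 'a) \<Rightarrow> (nat \<Rightarrow> 'a)) set set" where
  "Omega m T = Dcoset m T ` Wgrp m T"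

definition act :: "nat \<Rightarrow> ('a, 'b) monoid_scheme \<Rightarrow> ((nat \<Rightarrow> 'a) \<Rightarrow> (nat \<Rightarrow> 'a)) set
    \<Rightarrow> ((nat \<Rightarrow> 'a) \<Rightarrow> (nat \<Rightarrow> 'a)) \<Rightarrow> ((nat \<Rightarrow> 'a) \<Rightarrow> (nat \<Rightarrow> 'a)) set" where
  "act m T \<omega> g = (\<lambda>z. wmult m T z g) ` \<omega>"

definition is_base :: "nat \<Rightarrow> ('a, 'b) monoid_scheme \<Rightarrow> ((nat \<Rightarrow> 'a) \<Rightarrow> (nat \<Rightarrow> 'a)) set set \<Rightarrow> bool" where
  "is_base m T B \<longleftrightarrow> B \<subseteq> Omega m T
     \<and> {g \<in> Wgrp m T. \<forall>\<omega>\<in>B. act m T \<omega> g = \<omega>} = {wone m T}"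

definition phi_elem :: "nat \<Rightarrow> ('a, 'b) monoid_scheme \<Rightarrow> (nat \<Rightarrow> 'a) \<Rightarrow> ((nat \<Rightarrow> 'a) \<Rightarrow> (nat \<Rightarrow> 'a))" where
  "phi_elem m T t = wr_elem m T (\<lambda>i. if i < m - 1 then inn T (t i) else (\<lambda>x \<in> carrier T. x)) id"

definition PP :: "nat \<Rightarrow> ('a, 'b) monoid_scheme \<Rightarrow> real" where
  "PP m T = real (card {t \<in> {..<m - 1} \<rightarrow>\<^sub>E carrier T.
                  is_base m T {Dgrp m T, Dcoset m T (phi_elem m T t)}})
            / real (card (carrier T)) ^ (m - 1)"

end

theory Submission
  imports Defs
begin

text \<open>Write \<open>\<phi>\<close> for the element \<open>(\<phi>\<^sub>t\<^sub>1, \<dots>, \<phi>\<^sub>t\<^sub>k, 1)\<close> of \<open>W(k+1, T)\<close>. Every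
  \<open>g = (\<alpha>, \<dots>, \<alpha>)\<sigma>\<close> in \<open>D\<close> fixes the point \<open>D\<close>, and if \<open>g\<close> commutes with \<open>\<phi>\<close> it also
  fixes \<open>D\<phi>\<close>; so \<open>{D, D\<phi>}\<close> can only be a base if no nontrivial such \<open>g\<close> exists. Equal
  entries \<open>t\<^sub>i = t\<^sub>j\<close> or \<open>t\<^sub>i = 1\<close> give a transposition commuting with \<open>\<phi>\<close>, and a nontrivial
  automorphism \<open>\<alpha>\<close> permuting \<open>R = {t\<^sub>1, \<dots>, t\<^sub>k}\<close> gives one by letting \<open>\<sigma>\<close> undo the
  permutation that \<open>\<alpha>\<close> induces on the indices. Hence every base tuple enumerates a \<open>k\<close>-subset
  of \<open>T\<^sup>#\<close> with trivial stabiliser, each such subset is enumerated by exactly \<open>k!\<close> tuples, and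
  \<open>|\<S>\<^sub>k| k! \<le> |T|\<^sup>k\<close>.\<close>

lemma auto_funcset: "\<alpha> \<in> auto T \<Longrightarrow> \<alpha> \<in> carrier T \<rightarrow> carrier T"
  by (simp add: auto_def hom_def)

lemma auto_inj_on: "\<alpha> \<in> auto T \<Longrightarrow> inj_on \<alpha> (carrier T)"
  by (simp add: auto_def Bij_def bij_betw_def)

lemma (in group) compose_in_auto:
  assumes "\<alpha> \<in> auto G" "\<beta> \<in> auto G"
  shows "compose (carrier G) \<alpha> \<beta> \<in> auto G"
proof -
  have "\<alpha> \<otimes>\<^bsub>BijGroup (carrier G)\<^esub> \<beta> \<in> auto G"
    using subgroup.m_closed[OF subgroup_auto] assms by blast
  then show ?thesis using assms by (simp add: BijGroup_def auto_def)
qed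

lemma (in group) auto_nontrivial_moves_point:
  assumes "\<alpha> \<in> auto G" "\<alpha> \<noteq> (\<lambda>x \<in> carrier G. x)"
  obtains y where "y \<in> carrier G" "\<alpha> y \<noteq> y"
proof -
  have "\<alpha> \<in> extensional (carrier G)" using assms(1) by (simp add: auto_def Bij_def)
  then have "\<not> (\<forall>y \<in> carrier G. \<alpha> y = y)"
    using assms(2) by (auto intro: extensionalityI)
  then show ?thesis using that by blast
qed

lemma group_nontrivial_if_not_comm:
  assumes "group G" "\<not> comm_group G"
  obtains u where "u \<in> carrier G" "u \<noteq> \<one>\<^bsub>G\<^esub>"
proof -
  have "\<not> carrier G \<subseteq> {\<one>\<^bsub>G\<^esub>}"
  proof
    assume "carrier G \<subseteq> {\<one>\<^bsub>G\<^esub>}"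
    then have "comm_group G" by (intro group.group_comm_groupI[OF assms(1)]) auto
    then show False using assms(2) by contradiction
  qed
  then show ?thesis using that by blast
qed


subsection \<open>Elements of the wreath product as transformations of \<open>T\<^sup>m\<close>\<close>

lemma wr_elem_apply:
  "f \<in> Xpts m T \<Longrightarrow> wr_elem m T \<alpha> \<sigma> f = (\<lambda>i \<in> {..<m}. \<alpha> i (f (\<sigma> i)))"
  by (simp add: wr_elem_def)

lemma wr_elem_in_Xpts:
  assumes "\<forall>i<m. \<alpha> i \<in> carrier T \<rightarrow> carrier T" "\<sigma> permutes {..<m}" "f \<in> Xpts m T"
  shows "wr_elem m T \<alpha> \<sigma> f \<in> Xpts m T"
proof -
  have "\<sigma> i < m" if "i < m" for i using permutes_in_image[OF assms(2)] that by auto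
  then show ?thesis using assms by (auto simp: wr_elem_apply Xpts_def)
qed

lemma wr_elem_PiE:
  assumes "\<forall>i<m. \<alpha> i \<in> carrier T \<rightarrow> carrier T" "\<sigma> permutes {..<m}"
  shows "wr_elem m T \<alpha> \<sigma> \<in> Xpts m T \<rightarrow>\<^sub>E Xpts m T"
  using wr_elem_in_Xpts[OF assms] by (simp add: wr_elem_def)

lemma inj_on_wr_elem:
  assumes "\<forall>i<m. inj_on (\<alpha> i) (carrier T)" "\<sigma> permutes {..<m}"
  shows "inj_on (wr_elem m T \<alpha> \<sigma>) (Xpts m T)"
proof (rule inj_onI)
  fix f f' assume f: "f \<in> Xpts m T" and f': "f' \<in> Xpts m T"
    and eq: "wr_elem m T \<alpha> \<sigma> f = wr_elem m T \<alpha> \<sigma> f'"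
  have "f (\<sigma> i) = f' (\<sigma> i)" if i: "i < m" for i
  proof -
    have "\<sigma> i < m" using permutes_in_image[OF assms(2)] i by simp
    then have "f (\<sigma> i) \<in> carrier T" "f' (\<sigma> i) \<in> carrier T" using f f' by (auto simp: Xpts_def)
    moreover have "\<alpha> i (f (\<sigma> i)) = \<alpha> i (f' (\<sigma> i))"
      using fun_cong[OF eq, of i] i f f' by (simp add: wr_elem_apply)
    ultimately show ?thesis using assms(1) i by (meson inj_onD)
  qed
  moreover have "\<sigma> (inv_into UNIV \<sigma> j) = j" "inv_into UNIV \<sigma> j < m" if "j < m" for j
    using permutes_inverses(1)[OF assms(2)] permutes_in_image[OF permutes_inv[OF assms(2)]] that
    by auto
  ultimately have "f j = f' j" if "j < m" for j using that by metis
  then show "f = f'" using f f' unfolding Xpts_def by (intro PiE_ext) auto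
qed

lemma compose_wr_elem_diag:
  assumes "\<alpha> \<in> carrier T \<rightarrow> carrier T" "\<beta> \<in> carrier T \<rightarrow> carrier T"
    and "\<sigma> permutes {..<m}" "\<tau> permutes {..<m}"
  shows "compose (Xpts m T) (wr_elem m T (\<lambda>_. \<alpha>) \<sigma>) (wr_elem m T (\<lambda>_. \<beta>) \<tau>)
       = wr_elem m T (\<lambda>_. compose (carrier T) \<alpha> \<beta>) (\<tau> \<circ> \<sigma>)"
proof
  fix f
  show "compose (Xpts m T) (wr_elem m T (\<lambda>_. \<alpha>) \<sigma>) (wr_elem m T (\<lambda>_. \<beta>) \<tau>) f
       = wr_elem m T (\<lambda>_. compose (carrier T) \<alpha> \<beta>) (\<tau> \<circ> \<sigma>) f"
  proof (cases "f \<in> Xpts m T")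
    case True
    have "\<sigma> i < m" "\<tau> i < m" if "i < m" for i
      using permutes_in_image[OF assms(3)] permutes_in_image[OF assms(4)] that by auto
    moreover have "wr_elem m T (\<lambda>_. \<beta>) \<tau> f \<in> Xpts m T"
      using wr_elem_in_Xpts[of m "\<lambda>_. \<beta>"] assms True by auto
    moreover have "f i \<in> carrier T" if "i < m" for i using True that by (auto simp: Xpts_def)
    ultimately show ?thesis using True assms(1,2)
      by (auto simp: compose_def wr_elem_apply Xpts_def)
  qed (simp add: compose_def wr_elem_def)
qed

lemma wr_elem_ne_wone:
  assumes "f \<in> Xpts m T" "i < m" "wr_elem m T \<alpha> \<sigma> f i \<noteq> f i"
  shows "wr_elem m T \<alpha> \<sigma> \<noteq> wone m T"
  using assms by (auto simp: wone_def)

lemma wr_elem_diag_commute: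
  assumes "\<forall>i<m. \<forall>y \<in> carrier T. \<alpha> (\<beta> (\<sigma> i) y) = \<beta> i (\<alpha> y)"
    and "\<forall>i<m. \<beta> i \<in> carrier T \<rightarrow> carrier T" "\<alpha> \<in> carrier T \<rightarrow> carrier T"
    and "\<sigma> permutes {..<m}" "f \<in> Xpts m T"
  shows "wr_elem m T (\<lambda>_. \<alpha>) \<sigma> (wr_elem m T \<beta> id f) = wr_elem m T \<beta> id (wr_elem m T (\<lambda>_. \<alpha>) \<sigma> f)"
proof -
  have \<sigma>: "\<sigma> i < m" if "i < m" for i using permutes_in_image[OF assms(4)] that by auto
  have f: "f i \<in> carrier T" if "i < m" for i using assms(5) that by (auto simp: Xpts_def)
  have "wr_elem m T \<beta> id f \<in> Xpts m T" "wr_elem m T (\<lambda>_. \<alpha>) \<sigma> f \<in> Xpts m T"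
    using wr_elem_in_Xpts[OF assms(2) permutes_id assms(5)]
      wr_elem_in_Xpts[of m "\<lambda>_. \<alpha>", OF _ assms(4,5)] assms(3) by auto
  then show ?thesis using assms(1,5) \<sigma> f by (auto simp: wr_elem_apply intro!: restrict_ext)
qed


subsection \<open>Elements of \<open>D\<close> fixing the points \<open>D\<close> and \<open>D x\<close>\<close>

lemma Dgrp_subset_PiE: "Dgrp m T \<subseteq> Xpts m T \<rightarrow>\<^sub>E Xpts m T"
  by (auto simp: Dgrp_def intro!: wr_elem_PiE dest: auto_funcset)

lemma compose_Dgrp_closed:
  assumes "group T" "g \<in> Dgrp m T" "d \<in> Dgrp m T"
  shows "compose (Xpts m T) g d \<in> Dgrp m T"
proof -
  obtain \<alpha> \<sigma> \<beta> \<tau> where g: "g = wr_elem m T (\<lambda>_. \<alpha>) \<sigma>" "\<alpha> \<in> auto T" "\<sigma> permutes {..<m}"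
    and d: "d = wr_elem m T (\<lambda>_. \<beta>) \<tau>" "\<beta> \<in> auto T" "\<tau> permutes {..<m}"
    using assms(2,3) unfolding Dgrp_def by blast
  have "compose (Xpts m T) g d = wr_elem m T (\<lambda>_. compose (carrier T) \<alpha> \<beta>) (\<tau> \<circ> \<sigma>)"
    using g d by (simp add: compose_wr_elem_diag auto_funcset)
  moreover have "compose (carrier T) \<alpha> \<beta> \<in> auto T"
    using group.compose_in_auto[OF assms(1)] g d by blast
  moreover have "\<tau> \<circ> \<sigma> permutes {..<m}" using permutes_compose g d by blast
  ultimately show ?thesis unfolding Dgrp_def by blast
qed

lemma compose_image_eq:
  assumes "finite A" "inj_on g A" "S \<subseteq> A \<rightarrow>\<^sub>E A" "\<And>z. z \<in> S \<Longrightarrow> compose A g z \<in> S"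
  shows "(\<lambda>z. compose A g z) ` S = S"
proof -
  have "inj_on (\<lambda>z. compose A g z) S"
  proof
    fix z z' assume z: "z \<in> S" "z' \<in> S" and eq: "compose A g z = compose A g z'"
    show "z = z'"
    proof (rule extensionalityI)
      show "z \<in> extensional A" "z' \<in> extensional A" using z assms(3) by (auto simp: PiE_def)
      fix f assume f: "f \<in> A"
      then have "g (z f) = g (z' f)" using fun_cong[OF eq, of f] by (simp add: compose_def)
      moreover have "z f \<in> A" "z' f \<in> A" using assms(3) z f by (auto simp: PiE_iff)
      ultimately show "z f = z' f" using inj_onD[OF assms(2)] by blast
    qed
  qed
  moreover have "finite S" using assms(1) by (intro finite_subset[OF assms(3)] finite_PiE)
  moreover have "(\<lambda>z. compose A g z) ` S \<subseteq> S" using assms(4) by blast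
  ultimately show ?thesis by (intro card_subset_eq) (simp_all add: card_image)
qed

lemma act_Dgrp_self:
  assumes "group T" "finite (carrier T)" "g \<in> Dgrp m T" "inj_on g (Xpts m T)"
  shows "act m T (Dgrp m T) g = Dgrp m T"
  unfolding act_def wmult_def
proof (rule compose_image_eq)
  show "finite (Xpts m T)" using assms(2) by (simp add: Xpts_def finite_PiE)
  show "inj_on g (Xpts m T)" "Dgrp m T \<subseteq> Xpts m T \<rightarrow>\<^sub>E Xpts m T"
    by (fact assms(4), fact Dgrp_subset_PiE)
  show "compose (Xpts m T) g d \<in> Dgrp m T" if "d \<in> Dgrp m T" for d
    using compose_Dgrp_closed assms(1,3) that .
qed

lemma act_Dcoset_self:
  assumes "group T" "finite (carrier T)" "g \<in> Dgrp m T" "inj_on g (Xpts m T)"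
    and x: "x \<in> Xpts m T \<rightarrow> Xpts m T"
    and commute: "\<And>f. f \<in> Xpts m T \<Longrightarrow> g (x f) = x (g f)"
  shows "act m T (Dcoset m T x) g = Dcoset m T x"
  unfolding act_def wmult_def
proof (rule compose_image_eq)
  let ?X = "Xpts m T"
  have coset: "Dcoset m T x = (\<lambda>d. compose ?X x d) ` Dgrp m T"
    by (simp add: Dcoset_def wmult_def)
  show "finite ?X" using assms(2) by (simp add: Xpts_def finite_PiE)
  show "inj_on g ?X" by fact
  show "Dcoset m T x \<subseteq> ?X \<rightarrow>\<^sub>E ?X"
  proof
    fix c assume "c \<in> Dcoset m T x"
    then obtain d where d: "d \<in> Dgrp m T" "c = compose ?X x d" by (auto simp: coset)
    then have "d \<in> ?X \<rightarrow> ?X" using Dgrp_subset_PiE by (auto simp: PiE_def)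
    then have "compose ?X x d \<in> ?X \<rightarrow> ?X" using funcset_compose x by blast
    then show "c \<in> ?X \<rightarrow>\<^sub>E ?X" by (simp add: PiE_def d(2) compose_extensional)
  qed
  fix c assume "c \<in> Dcoset m T x"
  then obtain d where d: "d \<in> Dgrp m T" "c = compose ?X x d" by (auto simp: coset)
  then have "d \<in> ?X \<rightarrow> ?X" using Dgrp_subset_PiE by (auto simp: PiE_def)
  then have "compose ?X g c = compose ?X x (compose ?X g d)"
    using commute d(2) by (auto simp: compose_def Pi_iff intro!: restrict_ext)
  then show "compose ?X g c \<in> Dcoset m T x"
    using compose_Dgrp_closed[OF assms(1,3) d(1)] by (simp add: coset)
qed

lemma not_base_if_diag_centralises:
  assumes grp: "group T" and fin: "finite (carrier T)"
    and \<alpha>: "\<alpha> \<in> auto T" and \<sigma>: "\<sigma> permutes {..<m}"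
    and \<beta>: "\<forall>i<m. \<beta> i \<in> carrier T \<rightarrow> carrier T"
    and comm: "\<forall>i<m. \<forall>y \<in> carrier T. \<alpha> (\<beta> (\<sigma> i) y) = \<beta> i (\<alpha> y)"
    and ne: "wr_elem m T (\<lambda>_. \<alpha>) \<sigma> \<noteq> wone m T"
  shows "\<not> is_base m T {Dgrp m T, Dcoset m T (wr_elem m T \<beta> id)}"
proof -
  let ?g = "wr_elem m T (\<lambda>_. \<alpha>) \<sigma>" and ?x = "wr_elem m T \<beta> id"
  have gD: "?g \<in> Dgrp m T" and gW: "?g \<in> Wgrp m T"
    unfolding Dgrp_def Wgrp_def using \<alpha> \<sigma> by blast+
  have inj: "inj_on ?g (Xpts m T)" by (intro inj_on_wr_elem) (simp_all add: \<sigma> auto_inj_on[OF \<alpha>])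
  have x: "?x \<in> Xpts m T \<rightarrow> Xpts m T" using wr_elem_in_Xpts[OF \<beta> permutes_id] by blast
  have "act m T (Dgrp m T) ?g = Dgrp m T"
    using act_Dgrp_self[OF grp fin gD inj] .
  moreover have "act m T (Dcoset m T ?x) ?g = Dcoset m T ?x"
    using act_Dcoset_self[OF grp fin gD inj x] wr_elem_diag_commute[OF comm \<beta> auto_funcset[OF \<alpha>] \<sigma>]
    by blast
  ultimately show ?thesis using gW ne unfolding is_base_def by blast
qed


subsection \<open>Obstructions to \<open>{D, D \<phi>}\<close> being a base\<close>

lemma inn_apply: "y \<in> carrier T \<Longrightarrow> inn T s y = inv\<^bsub>T\<^esub> s \<otimes>\<^bsub>T\<^esub> y \<otimes>\<^bsub>T\<^esub> s"
  by (simp add: inn_def)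

lemma (in group) inn_funcset: "s \<in> carrier G \<Longrightarrow> inn G s \<in> carrier G \<rightarrow> carrier G"
  by (simp add: inn_apply)

lemma not_base_if_coords_agree:
  assumes grp: "group T" and fin: "finite (carrier T)" and u: "u \<in> carrier T" "u \<noteq> \<one>\<^bsub>T\<^esub>"
    and \<beta>: "\<forall>i<m. \<beta> i \<in> carrier T \<rightarrow> carrier T"
    and ij: "i < m" "j < m" "i \<noteq> j" and eq: "\<forall>y \<in> carrier T. \<beta> i y = \<beta> j y"
  shows "\<not> is_base m T {Dgrp m T, Dcoset m T (wr_elem m T \<beta> id)}"
proof (rule not_base_if_diag_centralises[OF grp fin group.id_in_auto[OF grp] _ \<beta>])
  show \<sigma>: "transpose i j permutes {..<m}" using ij by (simp add: permutes_swap_id)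
  show "\<forall>l<m. \<forall>y \<in> carrier T. (\<lambda>x \<in> carrier T. x) (\<beta> (transpose i j l) y) = \<beta> l ((\<lambda>x \<in> carrier T. x) y)"
  proof (intro allI impI ballI)
    fix l y assume l: "l < m" and y: "y \<in> carrier T"
    have "\<beta> (transpose i j l) y = \<beta> l y" using eq y by (auto simp: transpose_def)
    moreover have "transpose i j l < m" using l ij by (auto simp: transpose_def)
    ultimately show "(\<lambda>x \<in> carrier T. x) (\<beta> (transpose i j l) y) = \<beta> l ((\<lambda>x \<in> carrier T. x) y)"
      using \<beta> l y by auto
  qed
  define f where "f = (\<lambda>l \<in> {..<m}. if l = i then u else \<one>\<^bsub>T\<^esub>)"
  have f: "f \<in> Xpts m T" using u monoid.one_closed[OF group.is_monoid[OF grp]] by (auto simp: f_def Xpts_def)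
  show "wr_elem m T (\<lambda>_. \<lambda>x \<in> carrier T. x) (transpose i j) \<noteq> wone m T"
  proof (rule wr_elem_ne_wone[OF f ij(1)])
    have "f j \<in> carrier T" using f ij by (auto simp: Xpts_def)
    then show "wr_elem m T (\<lambda>_. \<lambda>x \<in> carrier T. x) (transpose i j) f i \<noteq> f i"
      using f ij u by (simp add: wr_elem_apply f_def)
  qed
qed

lemma not_base_if_stabilised:
  assumes grp: "group T" and fin: "finite (carrier T)"
    and t: "t \<in> {..<k} \<rightarrow>\<^sub>E carrier T" "inj_on t {..<k}"
    and \<alpha>: "\<alpha> \<in> setstab T (t ` {..<k})" "\<alpha> \<noteq> (\<lambda>x \<in> carrier T. x)"
  shows "\<not> is_base (k+1) T {Dgrp (k+1) T, Dcoset (k+1) T (phi_elem (k+1) T t)}"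
proof -
  interpret group T by (fact grp)
  let ?K = "{..<k}" and ?\<beta> = "\<lambda>i. if i < k then inn T (t i) else (\<lambda>x \<in> carrier T. x)"
  have a: "\<alpha> \<in> auto T" and aR: "\<alpha> ` t ` ?K = t ` ?K" using \<alpha> by (auto simp: setstab_def)
  have hom: "group_hom T T \<alpha>" using grp a by (auto simp: group_hom_def group_hom_axioms_def auto_def)
  have tc: "t i \<in> carrier T" if "i < k" for i using t that by auto
  txt \<open>\<open>\<alpha>\<close> permutes the entries of \<open>t\<close>; \<open>\<sigma>\<close> is the index permutation with \<open>\<alpha> (t (\<sigma> i)) = t i\<close>.\<close>
  define h where "h = \<alpha> \<circ> t"
  have "inj_on h ?K" unfolding h_def
    using comp_inj_on[OF t(2) inj_on_subset[OF auto_inj_on[OF a]]] tc by auto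
  then have hb: "bij_betw h ?K (t ` ?K)" using aR by (simp add: bij_betw_def h_def image_comp)
  define \<sigma> where "\<sigma> = (\<lambda>i. if i \<in> ?K then inv_into ?K h (t i) else i)"
  have "bij_betw t ?K (t ` ?K)" using t(2) by (simp add: bij_betw_def)
  then have "bij_betw (inv_into ?K h \<circ> t) ?K ?K" using bij_betw_trans bij_betw_inv_into[OF hb] by blast
  then have "bij_betw \<sigma> ?K ?K" by (rule bij_betw_cong[THEN iffD1, rotated]) (simp add: \<sigma>_def)
  then have "\<sigma> permutes ?K" by (rule bij_imp_permutes) (simp add: \<sigma>_def)
  then have \<sigma>: "\<sigma> permutes {..<k+1}" and \<sigma>K: "\<And>i. i < k \<Longrightarrow> \<sigma> i < k"
    using permutes_in_image by (fastforce intro: permutes_subset)+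
  have h\<sigma>: "\<alpha> (t (\<sigma> i)) = t i" if "i < k" for i
    using that hb f_inv_into_f[of "t i" h ?K] by (auto simp: \<sigma>_def h_def bij_betw_def)
  have \<beta>: "\<forall>i<k+1. ?\<beta> i \<in> carrier T \<rightarrow> carrier T"
    using tc inn_funcset by auto
  have "\<not> is_base (k+1) T {Dgrp (k+1) T, Dcoset (k+1) T (wr_elem (k+1) T ?\<beta> id)}"
  proof (rule not_base_if_diag_centralises[OF grp fin a \<sigma> \<beta>])
    show "\<forall>i<k+1. \<forall>y \<in> carrier T. \<alpha> (?\<beta> (\<sigma> i) y) = ?\<beta> i (\<alpha> y)"
    proof (intro allI impI ballI)
      fix i y assume i: "i < k+1" and y: "y \<in> carrier T"
      have ay: "\<alpha> y \<in> carrier T" using auto_funcset[OF a] y by auto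
      show "\<alpha> (?\<beta> (\<sigma> i) y) = ?\<beta> i (\<alpha> y)"
      proof (cases "i < k")
        case True
        have ts: "t (\<sigma> i) \<in> carrier T" using tc \<sigma>K[OF True] by simp
        have "\<alpha> (?\<beta> (\<sigma> i) y) = \<alpha> (inv\<^bsub>T\<^esub> (t (\<sigma> i)) \<otimes>\<^bsub>T\<^esub> y \<otimes>\<^bsub>T\<^esub> t (\<sigma> i))"
          using \<sigma>K[OF True] y by (simp add: inn_apply)
        also have "\<dots> = inv\<^bsub>T\<^esub> (\<alpha> (t (\<sigma> i))) \<otimes>\<^bsub>T\<^esub> \<alpha> y \<otimes>\<^bsub>T\<^esub> \<alpha> (t (\<sigma> i))"
          using ts y by (simp add: group_hom.hom_mult[OF hom] group_hom.hom_inv[OF hom])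
        finally show ?thesis using h\<sigma>[OF True] True ay by (simp add: inn_apply)
      next
        case False
        then have "i = k" "\<sigma> k = k" using i by (auto simp: \<sigma>_def)
        then show ?thesis using y ay by simp
      qed
    qed
    obtain y where y: "y \<in> carrier T" "\<alpha> y \<noteq> y"
      using auto_nontrivial_moves_point[OF a \<alpha>(2)] .
    have f: "(\<lambda>l \<in> {..<k+1}. y) \<in> Xpts (k+1) T" using y by (auto simp: Xpts_def)
    have "\<sigma> 0 < k + 1" using permutes_in_image[OF \<sigma>, of 0] by simp
    then show "wr_elem (k+1) T (\<lambda>_. \<alpha>) \<sigma> \<noteq> wone (k+1) T"
      using wr_elem_ne_wone[OF f, of 0] f y by (simp add: wr_elem_apply)
  qed
  then show ?thesis by (simp add: phi_elem_def)
qed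

lemma phi_elem_base_imp_regular_subset:
  assumes grp: "group T" and fin: "finite (carrier T)" and u: "u \<in> carrier T" "u \<noteq> \<one>\<^bsub>T\<^esub>"
    and t: "t \<in> {..<k} \<rightarrow>\<^sub>E carrier T"
    and base: "is_base (k+1) T {Dgrp (k+1) T, Dcoset (k+1) T (phi_elem (k+1) T t)}"
  shows "t \<in> {..<k} \<rightarrow>\<^sub>E carrier T - {\<one>\<^bsub>T\<^esub>}" "inj_on t {..<k}"
    and "setstab T (t ` {..<k}) = {(\<lambda>x \<in> carrier T. x)}"
proof -
  interpret group T by (fact grp)
  define \<beta> where "\<beta> = (\<lambda>i. if i < k then inn T (t i) else (\<lambda>x \<in> carrier T. x))"
  have base': "is_base (k+1) T {Dgrp (k+1) T, Dcoset (k+1) T (wr_elem (k+1) T \<beta> id)}"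
    using base by (simp add: phi_elem_def \<beta>_def)
  have tc: "t i \<in> carrier T" if "i < k" for i using t that by auto
  have \<beta>f: "\<forall>i<k+1. \<beta> i \<in> carrier T \<rightarrow> carrier T"
    using tc inn_funcset by (auto simp: \<beta>_def)
  note coords = not_base_if_coords_agree[OF grp fin u \<beta>f]
  have "t i \<noteq> \<one>\<^bsub>T\<^esub>" if i: "i < k" for i
  proof
    assume "t i = \<one>\<^bsub>T\<^esub>"
    then have "\<forall>y \<in> carrier T. \<beta> i y = \<beta> k y" using i by (simp add: \<beta>_def inn_apply)
    then show False using coords[of i k] i base' by simp
  qed
  then show "t \<in> {..<k} \<rightarrow>\<^sub>E carrier T - {\<one>\<^bsub>T\<^esub>}" using t by auto
  show inj: "inj_on t {..<k}"
  proof (rule inj_onI, rule ccontr)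
    fix i j assume "i \<in> {..<k}" "j \<in> {..<k}" "t i = t j" "i \<noteq> j"
    then show False using coords[of i j] base' by (simp add: \<beta>_def)
  qed
  show "setstab T (t ` {..<k}) = {(\<lambda>x \<in> carrier T. x)}"
    using id_in_auto tc not_base_if_stabilised[OF grp fin t inj] base
    by (auto simp: setstab_def)
qed


subsection \<open>Counting\<close>

lemma card_inj_enumerations:
  assumes "finite R" "card R = k" "R \<subseteq> C"
  shows "card {t \<in> {..<k} \<rightarrow>\<^sub>E C. inj_on t {..<k} \<and> t ` {..<k} = R} = fact k"
proof -
  have "t ` {..<k} = R" if "t \<in> {..<k} \<rightarrow>\<^sub>E R" "inj_on t {..<k}" for t
    using that assms by (intro card_subset_eq) (auto simp: card_image)
  then have "{t \<in> {..<k} \<rightarrow>\<^sub>E C. inj_on t {..<k} \<and> t ` {..<k} = R}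
      = {t \<in> {..<k} \<rightarrow>\<^sub>E R. inj_on t {..<k}}"
    using assms(3) by (auto simp: PiE_iff)
  also have "card \<dots> = fact k"
    using card_inj_on_subset_funcset[of "{..<k}" R "{..<k}"] assms by (simp add: fact_prod_rev)
  finally show ?thesis .
qed

lemma card_inj_enumerations_of:
  assumes "finite C" "S \<subseteq> {R. R \<subseteq> C \<and> card R = k}"
  shows "card {t \<in> {..<k} \<rightarrow>\<^sub>E C. inj_on t {..<k} \<and> t ` {..<k} \<in> S} = card S * fact k"
proof -
  let ?F = "\<lambda>R. {t \<in> {..<k} \<rightarrow>\<^sub>E C. inj_on t {..<k} \<and> t ` {..<k} = R}"
  have "{t \<in> {..<k} \<rightarrow>\<^sub>E C. inj_on t {..<k} \<and> t ` {..<k} \<in> S} = (\<Union>R\<in>S. ?F R)" by auto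
  also have "card \<dots> = (\<Sum>R\<in>S. card (?F R))"
  proof (rule card_UN_disjoint)
    show "finite S" using assms by (intro finite_subset[of S "Pow C"]) auto
    have "finite ({..<k} \<rightarrow>\<^sub>E C)" using assms(1) by (simp add: finite_PiE)
    then show "\<forall>R\<in>S. finite (?F R)" by simp
  qed auto
  also have "\<dots> = (\<Sum>R\<in>S. fact k)"
  proof (rule sum.cong)
    fix R assume "R \<in> S"
    then have "R \<subseteq> C" "card R = k" using assms(2) by auto
    then show "card (?F R) = fact k"
      using card_inj_enumerations finite_subset[OF _ assms(1)] by blast
  qed simp
  finally show ?thesis by simp
qed

lemma card_ksubsets_mult_fact_le:
  assumes "finite (carrier T)"
  shows "card (ksubsets T k) * fact k \<le> card (carrier T) ^ k"
proof -
  let ?C = "carrier T - {\<one>\<^bsub>T\<^esub>}"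
  have "card (ksubsets T k) * fact k
      = card {t \<in> {..<k} \<rightarrow>\<^sub>E ?C. inj_on t {..<k} \<and> t ` {..<k} \<in> ksubsets T k}"
    using card_inj_enumerations_of[of ?C "ksubsets T k" k] assms by (simp add: ksubsets_def)
  also have "\<dots> \<le> card ({..<k} \<rightarrow>\<^sub>E carrier T)"
    using assms by (intro card_mono finite_PiE) auto
  also have "\<dots> = card (carrier T) ^ k" by (simp add: card_funcsetE)
  finally show ?thesis .
qed

lemma card_base_tuples_le:
  assumes "group T" "finite (carrier T)" "u \<in> carrier T" "u \<noteq> \<one>\<^bsub>T\<^esub>"
  shows "card {t \<in> {..<k} \<rightarrow>\<^sub>E carrier T.
                is_base (k+1) T {Dgrp (k+1) T, Dcoset (k+1) T (phi_elem (k+1) T t)}}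
       \<le> card {R \<in> ksubsets T k. setstab T R = {(\<lambda>x \<in> carrier T. x)}} * fact k"
proof -
  let ?C = "carrier T - {\<one>\<^bsub>T\<^esub>}"
  let ?Good = "{R \<in> ksubsets T k. setstab T R = {(\<lambda>x \<in> carrier T. x)}}"
  let ?Enum = "{t \<in> {..<k} \<rightarrow>\<^sub>E ?C. inj_on t {..<k} \<and> t ` {..<k} \<in> ?Good}"
  have "{t \<in> {..<k} \<rightarrow>\<^sub>E carrier T.
          is_base (k+1) T {Dgrp (k+1) T, Dcoset (k+1) T (phi_elem (k+1) T t)}} \<subseteq> ?Enum"
  proof
    fix t assume "t \<in> {t \<in> {..<k} \<rightarrow>\<^sub>E carrier T.
        is_base (k+1) T {Dgrp (k+1) T, Dcoset (k+1) T (phi_elem (k+1) T t)}}"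
    then have "t \<in> {..<k} \<rightarrow>\<^sub>E carrier T"
      and "is_base (k+1) T {Dgrp (k+1) T, Dcoset (k+1) T (phi_elem (k+1) T t)}" by auto
    note regular = phi_elem_base_imp_regular_subset[OF assms this]
    have "t ` {..<k} \<in> ksubsets T k"
      using regular(1,2) by (auto simp: ksubsets_def card_image)
    then show "t \<in> ?Enum" using regular by simp
  qed
  moreover have "finite ?Enum" using assms(2) by (simp add: finite_PiE)
  ultimately have "card {t \<in> {..<k} \<rightarrow>\<^sub>E carrier T.
          is_base (k+1) T {Dgrp (k+1) T, Dcoset (k+1) T (phi_elem (k+1) T t)}} \<le> card ?Enum"
    by (intro card_mono)
  also have "card ?Enum = card ?Good * fact k"
    using assms(2) by (intro card_inj_enumerations_of) (auto simp: ksubsets_def)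
  finally show ?thesis .
qed

lemma ratio_le_one_minus_ratio:
  fixes b g q n m c :: nat
  assumes "b \<le> g * c" "n * c \<le> m" "g + q = n" "m > 0"
  shows "real q / real n \<le> 1 - real b / real m"
proof (cases "n = 0")
  case False
  have "b * n \<le> g * (n * c)" using mult_right_mono[OF assms(1), of n] by (simp add: mult_ac)
  also have "\<dots> \<le> g * m" using assms(2) by simp
  finally have "real b * real n \<le> real g * real m" by (simp flip: of_nat_mult)
  moreover have "real m * real n = real g * real m + real m * real q"
    by (simp add: algebra_simps flip: assms(3))
  ultimately show ?thesis using False assms(4) by (simp add: field_simps)
qed (use assms in simp)


theorem lemma6p2:
  fixes T :: "('a, 'b) monoid_scheme" and k :: nat
  assumes "simple_group T" and "finite (carrier T)" and "\<not> comm_group T" and "k \<ge> 4"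
  shows "QQ k T \<le> 1 - PP (k + 1) T"
proof -
  have grp: "group T" using assms(1) by (simp add: simple_group_def)
  obtain u where u: "u \<in> carrier T" "u \<noteq> \<one>\<^bsub>T\<^esub>"
    using group_nontrivial_if_not_comm[OF grp assms(3)] .
  let ?Good = "{R \<in> ksubsets T k. setstab T R = {(\<lambda>x \<in> carrier T. x)}}"
  let ?Bad = "{R \<in> ksubsets T k. setstab T R \<noteq> {(\<lambda>x \<in> carrier T. x)}}"
  have "finite (ksubsets T k)"
    using assms(2) by (auto simp: ksubsets_def intro: finite_subset[of _ "Pow (carrier T)"])
  then have split: "card ?Good + card ?Bad = card (ksubsets T k)"
    by (subst card_Un_disjoint[symmetric]) (auto intro: arg_cong[where f = card])
  have "card (carrier T) ^ k > 0" using u assms(2) by (auto simp: card_gt_0_iff)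
  from ratio_le_one_minus_ratio[OF card_base_tuples_le[OF grp assms(2) u]
      card_ksubsets_mult_fact_le[OF assms(2)] split this]
  show ?thesis by (simp add: QQ_def PP_def)
qed

end
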